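(* Let $\mathcal{M}$ be a $k\times\ell$ gridding matrix whose cell graph $G_\mathcal{M}$ is disconnected. Choose a connected component of $G_\mathcal{M}$, let $\mathcal{M}_1$ be the submatrix of $\mathcal{M}$ formed by the rows and columns containing vertices of this component, and $\mathcal{M}_2$ the submatrix formed by the remaining rows and columns. For an $\mathcal{M}$-gridded permutation $\pi$, let $\pi_1$ and $\pi_2$ be the subpermutations of $\pi$ formed by the points lying in the cells of $\mathcal{M}_1$ and of $\mathcal{M}_2$, respectively. Then $\mathrm{gw}(\pi)\le\max(\mathrm{gw}(\pi_1),\mathrm{gw}(\pi_2))+\max(k,\ell)$.
   Context: Permutations of length $n$ are identified with their diagrams $\{(i,\pi_i)\}$. A $k\times\ell$ gridding matrix $\mathcal{M}$ has permutation classes as entries. An $\mathcal{M}$-gridding of $\pi$ of length $n$ consists of possibly empty disjoint integer intervals $I_1<\dots<I_k$, $J_1<\dots<J_\ell$, each family with union $[n]$, such that the points in each cell $I_i\times J_j$ form a pattern in $\mathcal{M}_{i,j}$; an $\mathcal{M}$-gridded permutation is a permutation with a fixed $\mathcal{M}$-gridding. The cell graph $G_\mathcal{M}$ has as vertices the cells with infinite entries, adjacent when they share a row or column and all cells strictly between them are finite or empty; assume all entries of $\mathcal{M}$ are infinite or empty. Intervalicity of $A\subseteq[n]$ is the least number of disjoint integer intervals with union $A$; grid-complexity of a point set is the maximum of the intervalicities of its two axis projections. A grid tree of $\pi$ is a rooted binary tree with leaves labeled bijectively by points of $\pi$; its grid-width is the maximum over vertices $v$ of the grid-complexity of the leaf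 labels below $v$; $\mathrm{gw}(\pi)$ is the minimum grid-width over grid trees of $\pi$ (for a subpermutation, computed on its standardization, equivalently on its point set). *)

theory Defs
  imports Main
begin

definition is_perm :: "nat list \<Rightarrow> bool" where
  "is_perm p \<longleftrightarrow> distinct p \<and> set p = {1..length p}"

definition diagram :: "nat list \<Rightarrow> (nat \<times> nat) set" where
  "diagram p = {(Suc i, p ! i) | i. i < length p}"

text \<open>sigma is the standardization (pattern) of the point set S: there are
  strictly increasing maps on both axes carrying the diagram of sigma onto S.\<close>

definition std_of :: "(nat \<times> nat) set \<Rightarrow> nat list \<Rightarrow> bool" where
  "std_of S \<sigma> \<longleftrightarrow> is_perm \<sigma> \<and>
     (\<exists>f g. strict_mono_on {1..length \<sigma>} f \<and> strict_mono_on {1..length \<sigma>} g \<and>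
            (\<lambda>(a, b). (f a, g b)) ` diagram \<sigma> = S)"

definition std :: "(nat \<times> nat) set \<Rightarrow> nat list" where
  "std S = (THE \<sigma>. std_of S \<sigma>)"

definition contains :: "nat list \<Rightarrow> nat list \<Rightarrow> bool" where
  "contains \<pi> \<tau> \<longleftrightarrow> (\<exists>S \<subseteq> diagram \<pi>. std_of S \<tau>)"

definition perm_class :: "nat list set \<Rightarrow> bool" where
  "perm_class C \<longleftrightarrow> (\<forall>\<sigma>\<in>C. is_perm \<sigma>) \<and> (\<forall>\<sigma>\<in>C. \<forall>\<tau>. contains \<sigma> \<tau> \<longrightarrow> \<tau> \<in> C)"

text \<open>Column intervals I_i = {c i <.. c (i+1)} for i < k, row intervals
  J_j = {r j <.. r (j+1)} for j < l (0-based cell indices), possibly empty.\<close>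

definition cell_pts :: "nat list \<Rightarrow> (nat \<Rightarrow> nat) \<Rightarrow> (nat \<Rightarrow> nat) \<Rightarrow> nat \<Rightarrow> nat \<Rightarrow> (nat \<times> nat) set" where
  "cell_pts \<pi> c r i j = {p \<in> diagram \<pi>. c i < fst p \<and> fst p \<le> c (Suc i) \<and> r j < snd p \<and> snd p \<le> r (Suc j)}"

definition is_gridding ::
  "(nat \<Rightarrow> nat \<Rightarrow> nat list set) \<Rightarrow> nat \<Rightarrow> nat \<Rightarrow> nat list \<Rightarrow> (nat \<Rightarrow> nat) \<Rightarrow> (nat \<Rightarrow> nat) \<Rightarrow> bool" where
  "is_gridding M k l \<pi> c r \<longleftrightarrow>
     c 0 = 0 \<and> c k = length \<pi> \<and> (\<forall>i<k. c i \<le> c (Suc i)) \<and>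
     r 0 = 0 \<and> r l = length \<pi> \<and> (\<forall>j<l. r j \<le> r (Suc j)) \<and>
     (\<forall>i<k. \<forall>j<l. cell_pts \<pi> c r i j \<noteq> {} \<longrightarrow> (\<exists>\<sigma>\<in>M i j. std_of (cell_pts \<pi> c r i j) \<sigma>))"

definition cg_vertex :: "(nat \<Rightarrow> nat \<Rightarrow> nat list set) \<Rightarrow> nat \<Rightarrow> nat \<Rightarrow> nat \<times> nat \<Rightarrow> bool" where
  "cg_vertex M k l v \<longleftrightarrow> fst v < k \<and> snd v < l \<and> infinite (M (fst v) (snd v))"

definition cg_edges :: "(nat \<Rightarrow> nat \<Rightarrow> nat list set) \<Rightarrow> nat \<Rightarrow> nat \<Rightarrow> ((nat \<times> nat) \<times> (nat \<times> nat)) set" where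
  "cg_edges M k l = {((i, j), (i', j')). cg_vertex M k l (i, j) \<and> cg_vertex M k l (i', j') \<and> (i, j) \<noteq> (i', j') \<and>
      ((i = i' \<and> (\<forall>j''. min j j' < j'' \<and> j'' < max j j' \<longrightarrow> \<not> infinite (M i j''))) \<or>
       (j = j' \<and> (\<forall>i''. min i i' < i'' \<and> i'' < max i i' \<longrightarrow> \<not> infinite (M i'' j))))}"

definition cg_connected :: "(nat \<Rightarrow> nat \<Rightarrow> nat list set) \<Rightarrow> nat \<Rightarrow> nat \<Rightarrow> bool" where
  "cg_connected M k l \<longleftrightarrow>
     (\<forall>u w. cg_vertex M k l u \<and> cg_vertex M k l w \<longrightarrow> (u, w) \<in> (cg_edges M k l)\<^sup>*)"

definition cg_component :: "(nat \<Rightarrow> nat \<Rightarrow> nat list set) \<Rightarrow> nat \<Rightarrow> nat \<Rightarrow> nat \<times> nat \<Rightarrow> (nat \<times> nat) set" where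
  "cg_component M k l v0 = {w. cg_vertex M k l w \<and> (v0, w) \<in> (cg_edges M k l)\<^sup>*}"

definition comp_cols :: "(nat \<times> nat) set \<Rightarrow> nat set" where
  "comp_cols V = fst ` V"

definition comp_rows :: "(nat \<times> nat) set \<Rightarrow> nat set" where
  "comp_rows V = snd ` V"

definition sub_pts :: "nat list \<Rightarrow> (nat \<Rightarrow> nat) \<Rightarrow> (nat \<Rightarrow> nat) \<Rightarrow> nat set \<Rightarrow> nat set \<Rightarrow> (nat \<times> nat) set" where
  "sub_pts \<pi> c r Cs Rs = (\<Union>i\<in>Cs. \<Union>j\<in>Rs. cell_pts \<pi> c r i j)"

definition intervalicity :: "nat set \<Rightarrow> nat" where
  "intervalicity A = (LEAST m. \<exists>F. finite F \<and> card F = m \<and>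
       (\<forall>I\<in>F. \<exists>a b. a \<le> b \<and> I = {a..b}) \<and> pairwise disjnt F \<and> \<Union>F = A)"

definition grid_complexity :: "(nat \<times> nat) set \<Rightarrow> nat" where
  "grid_complexity S = max (intervalicity (fst ` S)) (intervalicity (snd ` S))"

datatype 'a gtree = GLeaf 'a | GNode "'a gtree" "'a gtree"

fun leaves :: "'a gtree \<Rightarrow> 'a list" where
  "leaves (GLeaf x) = [x]"
| "leaves (GNode l r) = leaves l @ leaves r"

fun subtrees :: "'a gtree \<Rightarrow> 'a gtree set" where
  "subtrees (GLeaf x) = {GLeaf x}"
| "subtrees (GNode l r) = insert (GNode l r) (subtrees l \<union> subtrees r)"

definition grid_tree :: "(nat \<times> nat) set \<Rightarrow> (nat \<times> nat) gtree \<Rightarrow> bool" where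
  "grid_tree S t \<longleftrightarrow> distinct (leaves t) \<and> set (leaves t) = S"

definition grid_width :: "(nat \<times> nat) gtree \<Rightarrow> nat" where
  "grid_width t = Max ((\<lambda>s. grid_complexity (set (leaves s))) ` subtrees t)"

text \<open>gw of a permutation; the empty permutation has gw 0 by convention.\<close>
definition gw :: "nat list \<Rightarrow> nat" where
  "gw \<pi> = (if \<pi> = [] then 0 else (LEAST w. \<exists>t. grid_tree (diagram \<pi>) t \<and> grid_width t = w))"

end

theory Submission
  imports Defs "HOL-Library.Infinite_Set"
begin

text \<open>The points of the component's cells and the remaining points partition \<open>\<pi>\<close>: every
  nonempty cell is a vertex of the cell graph, and vertices sharing a column or a row lie in the
  same component, so a cell's column belongs to the component iff its row does. Each part fills
  whole column intervals of at most \<open>k\<close> columns and whole row intervals of at most \<open>l\<close> rows,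
  hence has grid-complexity at most \<open>max k l\<close>. Carrying an optimal grid tree of its
  standardization back into \<open>\<pi>\<close> along the strictly increasing embedding raises every
  intervalicity by at most the intervalicity of the image, i.e. by at most \<open>max k l\<close>. Joining the
  two trees under a new root, whose leaves are all of \<open>\<pi>\<close> (grid-complexity 1), gives the bound.\<close>

section \<open>Intervalicity\<close>

text \<open>The left endpoints of the maximal intervals of \<open>X\<close>; the disjunct \<open>x = 0\<close> is needed
  because \<open>0 - 1 = 0\<close> on \<open>nat\<close>.\<close>

definition interval_starts :: "nat set \<Rightarrow> nat set" where
  "interval_starts X = {x \<in> X. x = 0 \<or> x - 1 \<notin> X}"

definition run_end :: "nat set \<Rightarrow> nat \<Rightarrow> nat" where
  "run_end X s = (LEAST e. s \<le> e \<and> Suc e \<notin> X)"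

lemma interval_starts_subset: "interval_starts X \<subseteq> X"
  by (auto simp: interval_starts_def)

lemma finite_interval_starts [simp]: "finite X \<Longrightarrow> finite (interval_starts X)"
  using interval_starts_subset finite_subset by blast

lemma card_interval_starts_le:
  assumes intervals: "\<forall>I\<in>F. \<exists>a b. a \<le> b \<and> I = {a..b}" and cover: "\<Union>F = X" and "finite F"
  shows "card (interval_starts X) \<le> card F"
proof -
  have "interval_starts X \<subseteq> Min ` F"
  proof
    fix x assume x: "x \<in> interval_starts X"
    then obtain I where I: "I \<in> F" "x \<in> I" using cover by (auto simp: interval_starts_def)
    then obtain a b where ab: "a \<le> b" "I = {a..b}" using intervals by blast
    have "a = x"
    proof (rule ccontr)
      assume "a \<noteq> x"
      then have "a < x" using I ab by simp
      then have "x - 1 \<in> I" using I ab by auto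
      then have "x - 1 \<in> X" using I cover by blast
      with x \<open>a < x\<close> show False by (simp add: interval_starts_def)
    qed
    then have "Min I = x" using ab by (intro Min_eqI) auto
    then show "x \<in> Min ` F" using I(1) by blast
  qed
  then show ?thesis by (meson \<open>finite F\<close> card_image_le card_mono finite_imageI le_trans)
qed

lemma run_end:
  assumes "finite X"
  shows "s \<le> run_end X s" and "Suc (run_end X s) \<notin> X"
proof -
  have "Suc (Max (insert s X)) \<notin> X"
  proof
    assume "Suc (Max (insert s X)) \<in> X"
    then have "Suc (Max (insert s X)) \<le> Max (insert s X)" using assms by simp
    then show False by simp
  qed
  then have "s \<le> Max (insert s X) \<and> Suc (Max (insert s X)) \<notin> X"
    using assms by simp
  then have "s \<le> run_end X s \<and> Suc (run_end X s) \<notin> X"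
    unfolding run_end_def by (rule LeastI)
  then show "s \<le> run_end X s" and "Suc (run_end X s) \<notin> X" by auto
qed

lemma run_subset:
  assumes "s \<in> X"
  shows "{s..run_end X s} \<subseteq> X"
proof
  fix y assume "y \<in> {s..run_end X s}"
  then have "s \<le> y" "y \<le> run_end X s" by auto
  then show "y \<in> X"
  proof (induction y rule: dec_induct)
    case base show ?case using assms .
  next
    case (step y)
    then show ?case
      using not_less_Least[of y "\<lambda>e. s \<le> e \<and> Suc e \<notin> X"] by (auto simp: run_end_def)
  qed
qed

lemma run_of_interval_start:
  assumes "finite X" "x \<in> X"
  obtains s where "s \<in> interval_starts X" "x \<in> {s..run_end X s}"
proof -
  define s where "s = (LEAST s. s \<le> x \<and> {s..x} \<subseteq> X)"
  have s: "s \<le> x" "{s..x} \<subseteq> X"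
    using LeastI[of "\<lambda>s. s \<le> x \<and> {s..x} \<subseteq> X" x] assms(2) by (auto simp: s_def)
  have "s \<in> interval_starts X"
  proof (rule ccontr)
    assume "s \<notin> interval_starts X"
    then have "s \<noteq> 0" "s - 1 \<in> X" using s by (auto simp: interval_starts_def)
    then have "{s - 1..x} = insert (s - 1) {s..x}" using s(1) by auto
    then have "s - 1 \<le> x \<and> {s - 1..x} \<subseteq> X" using s \<open>s - 1 \<in> X\<close> by auto
    then have "s \<le> s - 1" unfolding s_def by (rule Least_le)
    then show False using \<open>s \<noteq> 0\<close> by simp
  qed
  moreover have "x \<le> run_end X s"
  proof (rule ccontr)
    assume "\<not> x \<le> run_end X s"
    then have "Suc (run_end X s) \<in> {s..x}" using run_end(1)[OF assms(1), of s] by simp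
    then show False using s(2) run_end(2)[OF assms(1), of s] by blast
  qed
  ultimately show ?thesis using that s by auto
qed

lemma runs_disjoint:
  assumes "s \<in> interval_starts X" "s' \<in> interval_starts X" "s < s'"
  shows "disjnt {s..run_end X s} {s'..run_end X s'}"
proof (rule ccontr)
  assume "\<not> ?thesis"
  then have "s' - 1 \<in> {s..run_end X s}" using assms(3) by (auto simp: disjnt_def)
  then have "s' - 1 \<in> X" using run_subset assms(1) interval_starts_subset by blast
  then show False using assms(2,3) by (auto simp: interval_starts_def)
qed

lemma interval_partition_by_starts:
  assumes "finite X"
  shows "\<exists>F. finite F \<and> card F = card (interval_starts X) \<and>
       (\<forall>I\<in>F. \<exists>a b. a \<le> b \<and> I = {a..b}) \<and> pairwise disjnt F \<and> \<Union>F = X"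
proof (intro exI conjI)
  let ?run = "\<lambda>s. {s..run_end X s}"
  show "finite (?run ` interval_starts X)"
    using assms interval_starts_subset finite_subset by blast
  have "inj_on ?run (interval_starts X)"
    using run_end(1)[OF assms] by (intro inj_onI) (simp add: Icc_eq_Icc)
  then show "card (?run ` interval_starts X) = card (interval_starts X)"
    by (rule card_image)
  show "\<forall>I\<in>?run ` interval_starts X. \<exists>a b. a \<le> b \<and> I = {a..b}"
    using run_end(1)[OF assms] by blast
  show "pairwise disjnt (?run ` interval_starts X)"
    by (rule pairwise_imageI) (metis runs_disjoint disjnt_sym linorder_neqE_nat)
  show "\<Union>(?run ` interval_starts X) = X"
  proof
    show "\<Union>(?run ` interval_starts X) \<subseteq> X"
      using run_subset interval_starts_subset by blast
    show "X \<subseteq> \<Union>(?run ` interval_starts X)"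
      using run_of_interval_start[OF assms] by blast
  qed
qed

lemma intervalicity_eq_card_interval_starts:
  assumes "finite X"
  shows "intervalicity X = card (interval_starts X)"
  unfolding intervalicity_def
  by (rule Least_equality) (use interval_partition_by_starts[OF assms] card_interval_starts_le in blast)+

lemma interval_starts_image_subset:
  assumes mono: "strict_mono_on {1..m} f" and B: "B \<subseteq> {1..m}"
  shows "interval_starts (f ` B) \<subseteq> f ` interval_starts B \<union> interval_starts (f ` {1..m})"
proof
  fix y assume y: "y \<in> interval_starts (f ` B)"
  then obtain b where b: "b \<in> B" "y = f b" by (auto simp: interval_starts_def)
  show "y \<in> f ` interval_starts B \<union> interval_starts (f ` {1..m})"
  proof (cases "b \<in> interval_starts B")
    case True then show ?thesis using b by blast
  next
    case False
    then have pred_b: "b - 1 \<in> B" "b - 1 < b" using b by (auto simp: interval_starts_def)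
    have "y \<in> interval_starts (f ` {1..m})"
    proof (rule ccontr)
      assume "y \<notin> interval_starts (f ` {1..m})"
      then obtain a where a: "a \<in> {1..m}" "f a = y - 1" "y \<noteq> 0"
        using b B by (auto simp: interval_starts_def)
      have range: "b - 1 \<in> {1..m}" "b \<in> {1..m}" using pred_b b B by auto
      have "f (b - 1) < f b" using strict_mono_onD[OF mono range] pred_b(2) .
      have "f a < f b" using a b by simp
      then have "a \<le> b - 1"
        using strict_mono_on_less[OF mono a(1) range(2)] by simp
      then have "f a \<le> f (b - 1)"
        using strict_mono_on_less_eq[OF mono a(1) range(1)] by blast
      then have "f (b - 1) = y - 1" using a \<open>f (b - 1) < f b\<close> b by linarith
      then have "y - 1 \<in> f ` B" using pred_b by (metis image_eqI)
      then show False using y a(3) by (simp add: interval_starts_def)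
    qed
    then show ?thesis by blast
  qed
qed

lemma intervalicity_image_le:
  assumes mono: "strict_mono_on {1..m} f" and B: "B \<subseteq> {1..m}"
  shows "intervalicity (f ` B) \<le> intervalicity B + intervalicity (f ` {1..m})"
proof -
  have fin: "finite B" using B finite_subset by blast
  have "card (interval_starts (f ` B))
      \<le> card (f ` interval_starts B \<union> interval_starts (f ` {1..m}))"
    using interval_starts_image_subset[OF assms] fin by (intro card_mono) auto
  also have "\<dots> \<le> card (interval_starts B) + card (interval_starts (f ` {1..m}))"
    using card_Un_le card_image_le[OF finite_interval_starts[OF fin], of f]
    by (meson add_le_mono1 order_trans)
  finally show ?thesis using fin by (simp add: intervalicity_eq_card_interval_starts)
qed

lemma intervalicity_UN_greaterThanAtMost_le:
  assumes "finite C"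
  shows "intervalicity (\<Union>i\<in>C. {a i<..b i}) \<le> card C"
proof -
  let ?X = "\<Union>i\<in>C. {a i<..b i}"
  have "interval_starts ?X \<subseteq> (\<lambda>i. Suc (a i)) ` C"
  proof
    fix x assume x: "x \<in> interval_starts ?X"
    then obtain i where i: "i \<in> C" "a i < x" "x \<le> b i" by (auto simp: interval_starts_def)
    have "x - 1 \<notin> {a i<..b i}" using x i by (auto simp: interval_starts_def)
    then have "x = Suc (a i)" using i by auto
    then show "x \<in> (\<lambda>i. Suc (a i)) ` C" using i by blast
  qed
  then have "card (interval_starts ?X) \<le> card C"
    using assms by (meson card_image_le card_mono finite_imageI order_trans)
  then show ?thesis using assms by (simp add: intervalicity_eq_card_interval_starts)
qed

lemma intervalicity_atLeastAtMost_le: "intervalicity {m..n} \<le> 1"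
proof -
  have "interval_starts {m..n} \<subseteq> {m}" by (auto simp: interval_starts_def)
  then have "card (interval_starts {m..n}) \<le> 1" using card_mono[of "{m}"] by fastforce
  then show ?thesis by (simp add: intervalicity_eq_card_interval_starts)
qed

section \<open>Standardization\<close>

lemma diagram_eq: "diagram \<sigma> = (\<lambda>i. (Suc i, \<sigma> ! i)) ` {..<length \<sigma>}"
  by (auto simp: diagram_def)

lemma finite_diagram [simp]: "finite (diagram \<sigma>)"
  by (simp add: diagram_eq)

lemma card_diagram: "card (diagram \<sigma>) = length \<sigma>"
  unfolding diagram_eq by (subst card_image) (auto simp: inj_on_def)

lemma fst_diagram: "fst ` diagram \<sigma> = {1..length \<sigma>}"
proof -
  have "fst ` diagram \<sigma> = Suc ` {..<length \<sigma>}" unfolding diagram_eq image_image by simp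
  then show ?thesis by (simp only: image_Suc_lessThan)
qed

lemma snd_diagram: "is_perm \<sigma> \<Longrightarrow> snd ` diagram \<sigma> = {1..length \<sigma>}"
proof -
  have "snd ` diagram \<sigma> = set \<sigma>" by (auto simp: diagram_def in_set_conv_nth image_iff)
  then show "is_perm \<sigma> \<Longrightarrow> ?thesis" by (simp add: is_perm_def)
qed

lemma inj_on_fst_diagram: "inj_on fst (diagram \<sigma>)"
  by (auto simp: inj_on_def diagram_def)

lemma inj_on_snd_diagram: "is_perm \<sigma> \<Longrightarrow> inj_on snd (diagram \<sigma>)"
  by (auto simp: inj_on_def diagram_def is_perm_def nth_eq_iff_index_eq)

lemma diagram_subset_square:
  assumes "is_perm \<sigma>"
  shows "diagram \<sigma> \<subseteq> {1..length \<sigma>} \<times> {1..length \<sigma>}"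
proof
  fix p assume "p \<in> diagram \<sigma>"
  then have "fst p \<in> fst ` diagram \<sigma>" "snd p \<in> snd ` diagram \<sigma>" by simp_all
  then show "p \<in> {1..length \<sigma>} \<times> {1..length \<sigma>}"
    unfolding fst_diagram snd_diagram[OF assms] by (simp add: mem_Times_iff)
qed

lemma diagram_functional: "(a, b) \<in> diagram \<sigma> \<Longrightarrow> (a, b') \<in> diagram \<sigma> \<Longrightarrow> b = b'"
  by (auto simp: diagram_def)

lemma diagram_inject:
  assumes "diagram \<sigma> = diagram \<tau>"
  shows "\<sigma> = \<tau>"
proof (rule nth_equalityI)
  show "length \<sigma> = length \<tau>" using assms card_diagram by metis
  fix i assume "i < length \<sigma>"
  then have "(Suc i, \<sigma> ! i) \<in> diagram \<sigma>" "(Suc i, \<tau> ! i) \<in> diagram \<tau>"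
    using \<open>length \<sigma> = length \<tau>\<close> by (auto simp: diagram_def)
  then have "(Suc i, \<sigma> ! i) \<in> diagram \<tau>" "(Suc i, \<tau> ! i) \<in> diagram \<tau>"
    using assms by simp_all
  then show "\<sigma> ! i = \<tau> ! i" by (rule diagram_functional)
qed

lemma std_of_iff_map_prod:
  "std_of S \<sigma> \<longleftrightarrow> is_perm \<sigma> \<and> (\<exists>f g. strict_mono_on {1..length \<sigma>} f \<and>
     strict_mono_on {1..length \<sigma>} g \<and> map_prod f g ` diagram \<sigma> = S)"
  by (simp add: std_of_def map_prod_def)

lemma strict_mono_on_image_unique:
  fixes f f' :: "nat \<Rightarrow> 'a :: linorder"
  assumes "strict_mono_on {1..m} f" "strict_mono_on {1..m} f'" "f ` {1..m} = f' ` {1..m}"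
    and "i \<in> {1..m}"
  shows "f i = f' i"
proof -
  have sorted: "sorted_wrt (<) (map h [1..<Suc m])" if "strict_mono_on {1..m} h" for h :: "nat \<Rightarrow> 'a"
    using strict_mono_onD[OF that] by (intro sorted_wrt_map_mono[OF sorted_wrt_upt]) auto
  have "set [1..<Suc m] = {1..m}" by auto
  then have "map f [1..<Suc m] = map f' [1..<Suc m]"
    using assms(3) by (intro strict_sorted_equal sorted assms(1,2)) simp
  then have "\<forall>x\<in>set [1..<Suc m]. f x = f' x" by (simp only: map_eq_conv)
  then show ?thesis using assms(4) \<open>set [1..<Suc m] = {1..m}\<close> by blast
qed

lemma fst_image_map_prod: "fst ` map_prod f g ` A = f ` fst ` A"
  by (simp add: image_image)

lemma snd_image_map_prod: "snd ` map_prod f g ` A = g ` snd ` A"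
  by (simp add: image_image)

lemma inj_on_map_prod_square:
  fixes f :: "nat \<Rightarrow> 'a::preorder" and g :: "nat \<Rightarrow> 'b::preorder"
  assumes "strict_mono_on {1..m} f" "strict_mono_on {1..m} g"
  shows "inj_on (map_prod f g) ({1..m} \<times> {1..m})"
  using assms by (simp add: map_prod_inj_on strict_mono_on_imp_inj_on)

lemma std_of_length:
  assumes "std_of S \<sigma>"
  shows "length \<sigma> = card S"
proof -
  obtain f g where \<sigma>: "is_perm \<sigma>" "strict_mono_on {1..length \<sigma>} f" "strict_mono_on {1..length \<sigma>} g"
    "map_prod f g ` diagram \<sigma> = S"
    using assms unfolding std_of_iff_map_prod by blast
  have "inj_on (map_prod f g) (diagram \<sigma>)"
    using inj_on_subset[OF inj_on_map_prod_square[OF \<sigma>(2,3)] diagram_subset_square[OF \<sigma>(1)]] .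
  then have "card S = card (diagram \<sigma>)" using card_image \<sigma>(4) by blast
  then show ?thesis by (simp add: card_diagram)
qed

lemma std_of_unique:
  assumes "std_of S \<sigma>" "std_of S \<tau>"
  shows "\<sigma> = \<tau>"
proof -
  obtain f g where \<sigma>: "is_perm \<sigma>" "strict_mono_on {1..length \<sigma>} f" "strict_mono_on {1..length \<sigma>} g"
    "map_prod f g ` diagram \<sigma> = S"
    using assms(1) unfolding std_of_iff_map_prod by blast
  obtain f' g' where \<tau>: "is_perm \<tau>" "strict_mono_on {1..length \<tau>} f'" "strict_mono_on {1..length \<tau>} g'"
    "map_prod f' g' ` diagram \<tau> = S"
    using assms(2) unfolding std_of_iff_map_prod by blast
  have m: "length \<tau> = length \<sigma>" using std_of_length[OF assms(1)] std_of_length[OF assms(2)] by simp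
  let ?I = "{1..length \<sigma>}"
  have "f ` ?I = fst ` S" using \<sigma>(4)[symmetric] fst_diagram[of \<sigma>] by (simp add: fst_image_map_prod)
  moreover have "f' ` ?I = fst ` S" using \<tau>(4)[symmetric] fst_diagram[of \<tau>] m by (simp add: fst_image_map_prod)
  ultimately have "f ` ?I = f' ` ?I" by simp
  then have f: "\<forall>i\<in>?I. f i = f' i"
    using strict_mono_on_image_unique[OF \<sigma>(2) \<tau>(2)[unfolded m]] by blast
  have "g ` ?I = snd ` S" using \<sigma>(4)[symmetric] snd_diagram[OF \<sigma>(1)] by (simp add: snd_image_map_prod)
  moreover have "g' ` ?I = snd ` S"
    using \<tau>(4)[symmetric] snd_diagram[OF \<tau>(1)] m by (simp add: snd_image_map_prod)
  ultimately have "g ` ?I = g' ` ?I" by simp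
  then have g: "\<forall>i\<in>?I. g i = g' i"
    using strict_mono_on_image_unique[OF \<sigma>(3) \<tau>(3)[unfolded m]] by blast
  have sub: "diagram \<sigma> \<subseteq> ?I \<times> ?I" "diagram \<tau> \<subseteq> ?I \<times> ?I"
    using diagram_subset_square[OF \<sigma>(1)] diagram_subset_square[OF \<tau>(1)] m by simp_all
  have "map_prod f g ` diagram \<tau> = S"
    unfolding \<tau>(4)[symmetric] using sub(2) f g by (intro image_cong) auto
  then have "map_prod f g ` diagram \<sigma> = map_prod f g ` diagram \<tau>" using \<sigma>(4) by simp
  then have "diagram \<sigma> = diagram \<tau>"
    using inj_on_image_eq_iff[OF inj_on_map_prod_square[OF \<sigma>(2,3)] sub] by simp
  then show ?thesis by (rule diagram_inject)
qed

lemma is_perm_of_bij: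
  assumes "bij_betw \<rho> {..<m} {..<m}"
  shows "is_perm (map (\<lambda>i. Suc (\<rho> i)) [0..<m])"
    and "diagram (map (\<lambda>i. Suc (\<rho> i)) [0..<m]) = (\<lambda>i. (Suc i, Suc (\<rho> i))) ` {..<m}"
proof -
  have "inj_on \<rho> {..<m}" "\<rho> ` {..<m} = {..<m}" using assms by (simp_all add: bij_betw_def)
  then have "distinct (map (\<lambda>i. Suc (\<rho> i)) [0..<m])"
    by (simp add: distinct_map atLeast0LessThan inj_on_def)
  moreover have "set (map (\<lambda>i. Suc (\<rho> i)) [0..<m]) = Suc ` \<rho> ` {..<m}"
    by (simp add: image_image atLeast0LessThan)
  ultimately show "is_perm (map (\<lambda>i. Suc (\<rho> i)) [0..<m])"
    using \<open>\<rho> ` {..<m} = {..<m}\<close> by (simp add: is_perm_def image_Suc_lessThan)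
  show "diagram (map (\<lambda>i. Suc (\<rho> i)) [0..<m]) = (\<lambda>i. (Suc i, Suc (\<rho> i))) ` {..<m}"
    unfolding diagram_eq by (intro image_cong) auto
qed

lemma std_of_exists:
  assumes "finite S" "inj_on fst S" "inj_on snd S"
  shows "\<exists>\<sigma>. std_of S \<sigma>"
proof -
  define m where "m = card S"
  have "card (fst ` S) = m" "card (snd ` S) = m"
    using card_image assms(2,3) m_def by simp_all
  then obtain hx hy where hx: "bij_betw hx {..<m} (fst ` S)" "strict_mono_on {..<m} hx"
    and hy: "bij_betw hy {..<m} (snd ` S)" "strict_mono_on {..<m} hy"
    using ex_bij_betw_strict_mono_card finite_imageI[OF assms(1)] by metis
  define point where "point = the_inv_into S fst"
  have point: "bij_betw point (fst ` S) S"
    unfolding point_def using assms(2) by (intro bij_betw_the_inv_into) (simp add: bij_betw_def)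
  \<comment> \<open>\<open>\<rho> i\<close> is the rank of the height of the point in the \<open>i\<close>-th column.\<close>
  define \<rho> where "\<rho> = the_inv_into {..<m} hy \<circ> snd \<circ> point \<circ> hx"
  have "bij_betw snd S (snd ` S)" using assms(3) by (simp add: bij_betw_def)
  then have "bij_betw (snd \<circ> (point \<circ> hx)) {..<m} (snd ` S)"
    by (intro bij_betw_trans[OF bij_betw_trans[OF hx(1) point]])
  then have "bij_betw \<rho> {..<m} {..<m}"
    unfolding \<rho>_def comp_assoc by (rule bij_betw_trans[OF _ bij_betw_the_inv_into[OF hy(1)]])
  define \<sigma> where "\<sigma> = map (\<lambda>i. Suc (\<rho> i)) [0..<m]"
  have \<sigma>: "is_perm \<sigma>" "diagram \<sigma> = (\<lambda>i. (Suc i, Suc (\<rho> i))) ` {..<m}" "length \<sigma> = m"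
    using is_perm_of_bij[OF \<open>bij_betw \<rho> {..<m} {..<m}\<close>] by (simp_all add: \<sigma>_def)
  define f where "f a = hx (a - 1)" for a
  define g where "g b = hy (b - 1)" for b
  have mono: "strict_mono_on {1..m} f" "strict_mono_on {1..m} g"
    using strict_mono_onD[OF hx(2)] strict_mono_onD[OF hy(2)]
    by (auto intro!: strict_mono_onI simp: f_def g_def)
  have "map_prod f g (Suc i, Suc (\<rho> i)) = point (hx i)" if "i < m" for i
  proof -
    have "hx i \<in> fst ` S" using hx(1) that by (simp add: bij_betw_apply)
    then have "point (hx i) \<in> S" "fst (point (hx i)) = hx i"
      using point bij_betw_apply f_the_inv_into_f[OF assms(2)] by (fastforce simp: point_def)+
    moreover have "hy (\<rho> i) = snd (point (hx i))"
      unfolding \<rho>_def using \<open>point (hx i) \<in> S\<close> hy(1)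
      by (simp add: f_the_inv_into_f bij_betw_def)
    ultimately show ?thesis by (simp add: f_def g_def prod_eq_iff)
  qed
  then have "map_prod f g ` diagram \<sigma> = point ` hx ` {..<m}"
    unfolding \<sigma>(2) image_image by (intro image_cong) auto
  also have "\<dots> = S" using hx(1) point by (simp add: bij_betw_def)
  finally have "std_of S \<sigma>" unfolding std_of_iff_map_prod \<sigma>(3) using \<sigma>(1) mono by blast
  then show ?thesis ..
qed

lemma std_of_std:
  assumes "finite S" "inj_on fst S" "inj_on snd S"
  shows "std_of S (std S)"
  unfolding std_def by (rule theI'[OF ex_ex1I[OF std_of_exists[OF assms] std_of_unique]])

section \<open>Grid trees\<close>

primrec caterpillar :: "'a \<Rightarrow> 'a list \<Rightarrow> 'a gtree" where
  "caterpillar x [] = GLeaf x"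
| "caterpillar x (y # ys) = GNode (GLeaf x) (caterpillar y ys)"

lemma leaves_caterpillar: "leaves (caterpillar x ys) = x # ys"
  by (induction ys arbitrary: x) auto

lemma finite_subtrees: "finite (subtrees t)"
  by (induction t) auto

lemma self_in_subtrees: "t \<in> subtrees t"
  by (cases t) auto

lemma leaves_subtree_subset: "s \<in> subtrees t \<Longrightarrow> set (leaves s) \<subseteq> set (leaves t)"
  by (induction t) auto

lemma subtrees_trans: "s \<in> subtrees t \<Longrightarrow> u \<in> subtrees s \<Longrightarrow> u \<in> subtrees t"
  by (induction t) auto

lemma leaves_map_gtree: "leaves (map_gtree \<phi> t) = map \<phi> (leaves t)"
  by (induction t) auto

lemma subtrees_map_gtree: "subtrees (map_gtree \<phi> t) = map_gtree \<phi> ` subtrees t"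
  by (induction t) auto

lemma grid_tree_exists:
  assumes "finite S" "S \<noteq> {}"
  shows "\<exists>t. grid_tree S t"
proof -
  obtain xs where "set xs = S" "distinct xs" using finite_distinct_list[OF assms(1)] by blast
  moreover obtain x ys where "xs = x # ys" using calculation assms(2) by (cases xs) auto
  ultimately have "grid_tree S (caterpillar x ys)" by (simp add: grid_tree_def leaves_caterpillar)
  then show ?thesis ..
qed

lemma grid_width_ge: "s \<in> subtrees t \<Longrightarrow> grid_complexity (set (leaves s)) \<le> grid_width t"
  unfolding grid_width_def by (rule Max_ge) (simp_all add: finite_subtrees)

lemma grid_width_le:
  "(\<And>s. s \<in> subtrees t \<Longrightarrow> grid_complexity (set (leaves s)) \<le> w) \<Longrightarrow> grid_width t \<le> w"
  unfolding grid_width_def using self_in_subtrees[of t] by (subst Max_le_iff) (auto simp: finite_subtrees)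

lemma grid_width_mono_subtree: "s \<in> subtrees t \<Longrightarrow> grid_width s \<le> grid_width t"
  by (intro grid_width_le grid_width_ge) (rule subtrees_trans)

lemma grid_width_GNode:
  "grid_width (GNode t1 t2) =
     max (grid_complexity (set (leaves t1) \<union> set (leaves t2))) (max (grid_width t1) (grid_width t2))"
  (is "_ = ?w")
proof (rule antisym)
  show "grid_width (GNode t1 t2) \<le> ?w"
  proof (rule grid_width_le)
    fix s assume "s \<in> subtrees (GNode t1 t2)"
    then consider "s = GNode t1 t2" | "s \<in> subtrees t1" | "s \<in> subtrees t2" by auto
    then show "grid_complexity (set (leaves s)) \<le> ?w"
      by cases (use grid_width_ge[of s t1] grid_width_ge[of s t2] in auto)
  qed
  have "GNode t1 t2 \<in> subtrees (GNode t1 t2)" "t1 \<in> subtrees (GNode t1 t2)" "t2 \<in> subtrees (GNode t1 t2)"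
    using self_in_subtrees[of t1] self_in_subtrees[of t2] by auto
  then show "?w \<le> grid_width (GNode t1 t2)"
    using grid_width_ge[of "GNode t1 t2" "GNode t1 t2"] grid_width_mono_subtree by simp
qed

lemma gw_le_grid_width:
  assumes "grid_tree (diagram \<pi>) t"
  shows "gw \<pi> \<le> grid_width t"
proof (cases "\<pi> = []")
  case False
  have "(LEAST w. \<exists>t. grid_tree (diagram \<pi>) t \<and> grid_width t = w) \<le> grid_width t"
    using assms by (intro Least_le) blast
  then show ?thesis unfolding gw_def using False by simp
qed (simp add: gw_def)

lemma gw_attained:
  assumes "\<pi> \<noteq> []"
  shows "\<exists>t. grid_tree (diagram \<pi>) t \<and> grid_width t = gw \<pi>"
proof -
  have "card (diagram \<pi>) \<noteq> 0" using assms by (simp add: card_diagram)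
  then have "diagram \<pi> \<noteq> {}" by (rule contrapos_nn) simp
  then obtain t where "grid_tree (diagram \<pi>) t" using grid_tree_exists[OF finite_diagram] by blast
  then have "\<exists>w t. grid_tree (diagram \<pi>) t \<and> grid_width t = w" by blast
  then have "\<exists>t. grid_tree (diagram \<pi>) t \<and>
      grid_width t = (LEAST w. \<exists>t. grid_tree (diagram \<pi>) t \<and> grid_width t = w)"
    by (rule LeastI_ex)
  then show ?thesis unfolding gw_def using assms by simp
qed

lemma grid_complexity_map_prod_le:
  assumes "strict_mono_on {1..m} f" "strict_mono_on {1..m} g"
    and "A \<subseteq> {1..m} \<times> {1..m}"
  shows "grid_complexity (map_prod f g ` A)
    \<le> grid_complexity A + max (intervalicity (f ` {1..m})) (intervalicity (g ` {1..m}))"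
proof -
  have "fst ` A \<subseteq> {1..m}" "snd ` A \<subseteq> {1..m}" using assms(3) by auto
  then have "intervalicity (f ` fst ` A) \<le> intervalicity (fst ` A) + intervalicity (f ` {1..m})"
    "intervalicity (g ` snd ` A) \<le> intervalicity (snd ` A) + intervalicity (g ` {1..m})"
    using intervalicity_image_le assms(1,2) by blast+
  then show ?thesis
    unfolding grid_complexity_def fst_image_map_prod snd_image_map_prod by linarith
qed

lemma grid_tree_of_std:
  assumes "finite S" "inj_on fst S" "inj_on snd S" "S \<noteq> {}"
  shows "\<exists>t. grid_tree S t \<and> grid_width t \<le> gw (std S) + grid_complexity S"
proof -
  define \<sigma> where "\<sigma> = std S"
  obtain f g where \<sigma>: "is_perm \<sigma>" "strict_mono_on {1..length \<sigma>} f" "strict_mono_on {1..length \<sigma>} g"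
    "map_prod f g ` diagram \<sigma> = S"
    using std_of_std[OF assms(1-3)] unfolding std_of_iff_map_prod \<sigma>_def[symmetric] by blast
  have "\<sigma> \<noteq> []" using \<sigma>(4) assms(4) by (auto simp: diagram_def)
  then obtain t' where t': "grid_tree (diagram \<sigma>) t'" "grid_width t' = gw \<sigma>"
    using gw_attained by blast
  define t where "t = map_gtree (map_prod f g) t'"
  have inj: "inj_on (map_prod f g) (diagram \<sigma>)"
    using inj_on_subset[OF inj_on_map_prod_square[OF \<sigma>(2,3)] diagram_subset_square[OF \<sigma>(1)]] .
  have "grid_tree S t"
    using t'(1) inj \<sigma>(4) by (simp add: grid_tree_def t_def leaves_map_gtree distinct_map)
  moreover have "grid_width t \<le> gw \<sigma> + grid_complexity S"
  proof (rule grid_width_le)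
    fix s assume "s \<in> subtrees t"
    then obtain s' where s': "s' \<in> subtrees t'" "s = map_gtree (map_prod f g) s'"
      by (auto simp: t_def subtrees_map_gtree)
    have sub: "set (leaves s') \<subseteq> diagram \<sigma>"
      using leaves_subtree_subset[OF s'(1)] t'(1) by (simp add: grid_tree_def)
    have "max (intervalicity (f ` {1..length \<sigma>})) (intervalicity (g ` {1..length \<sigma>}))
        = grid_complexity S"
      unfolding grid_complexity_def \<sigma>(4)[symmetric] fst_image_map_prod snd_image_map_prod
        fst_diagram snd_diagram[OF \<sigma>(1)] ..
    then have "grid_complexity (set (leaves s)) \<le> grid_complexity (set (leaves s')) + grid_complexity S"
      using grid_complexity_map_prod_le[OF \<sigma>(2,3) order.trans[OF sub diagram_subset_square[OF \<sigma>(1)]]]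
      by (simp add: s'(2) leaves_map_gtree)
    also have "\<dots> \<le> gw \<sigma> + grid_complexity S"
      using grid_width_ge[OF s'(1)] t'(2) by simp
    finally show "grid_complexity (set (leaves s)) \<le> gw \<sigma> + grid_complexity S" .
  qed
  ultimately show ?thesis unfolding \<sigma>_def by blast
qed

lemma grid_complexity_diagram_le_1:
  assumes "is_perm \<pi>"
  shows "grid_complexity (diagram \<pi>) \<le> 1"
  unfolding grid_complexity_def fst_diagram snd_diagram[OF assms]
  using intervalicity_atLeastAtMost_le by simp

lemma gw_le_split:
  assumes perm: "is_perm \<pi>" and split: "diagram \<pi> = S1 \<union> S2" "S1 \<inter> S2 = {}"
    and bounds: "grid_complexity S1 \<le> K" "grid_complexity S2 \<le> K" "1 \<le> K"
  shows "gw \<pi> \<le> max (gw (std S1)) (gw (std S2)) + K"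
proof -
  let ?W = "max (gw (std S1)) (gw (std S2)) + K"
  have tree: "\<exists>t. grid_tree S t \<and> grid_width t \<le> gw (std S) + K"
    if S: "S \<subseteq> diagram \<pi>" "S \<noteq> {}" "grid_complexity S \<le> K" for S
  proof -
    have "finite S" "inj_on fst S" "inj_on snd S"
      using finite_subset[OF S(1) finite_diagram] inj_on_subset[OF inj_on_fst_diagram S(1)]
        inj_on_subset[OF inj_on_snd_diagram[OF perm] S(1)] .
    then obtain t where "grid_tree S t" "grid_width t \<le> gw (std S) + grid_complexity S"
      using grid_tree_of_std S(2) by blast
    then show ?thesis using S(3) by (intro exI[of _ t]) simp
  qed
  have "\<exists>t. grid_tree (diagram \<pi>) t \<and> grid_width t \<le> ?W" if ne: "diagram \<pi> \<noteq> {}"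
  proof (cases "S1 = {} \<or> S2 = {}")
    case True
    then obtain S where S: "S = S1 \<or> S = S2" "S = diagram \<pi>" using split by blast
    then have "grid_complexity S \<le> K" "gw (std S) + K \<le> ?W" using bounds by auto
    then obtain t where "grid_tree S t" "grid_width t \<le> gw (std S) + K"
      using tree[of S] S(2) ne by blast
    then show ?thesis using S(2) \<open>gw (std S) + K \<le> ?W\<close> by (intro exI[of _ t]) simp
  next
    case False
    then obtain t1 t2 where t: "grid_tree S1 t1" "grid_width t1 \<le> gw (std S1) + K"
      "grid_tree S2 t2" "grid_width t2 \<le> gw (std S2) + K"
      using tree[of S1] tree[of S2] split bounds by blast
    have "grid_tree (diagram \<pi>) (GNode t1 t2)"
      using t(1,3) split by (auto simp: grid_tree_def)
    moreover have "grid_complexity (diagram \<pi>) \<le> K"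
      using grid_complexity_diagram_le_1[OF perm] bounds(3) by linarith
    then have "grid_width (GNode t1 t2) \<le> ?W"
      using t(1,2,4) t(3) split unfolding grid_width_GNode grid_tree_def by auto
    ultimately show ?thesis by blast
  qed
  moreover have "gw \<pi> = 0" if "diagram \<pi> = {}"
    using that card_diagram[of \<pi>] by (simp add: gw_def)
  ultimately show ?thesis using gw_le_grid_width order.trans by fastforce
qed

section \<open>The cell graph\<close>

lemma rtrancl_linear_chain:
  fixes P :: "nat \<Rightarrow> bool" and v :: "nat \<Rightarrow> 'a"
  assumes step: "\<And>a b. P a \<Longrightarrow> P b \<Longrightarrow> a \<noteq> b \<Longrightarrow> (\<forall>x. min a b < x \<and> x < max a b \<longrightarrow> \<not> P x)
      \<Longrightarrow> (v a, v b) \<in> R"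
    and "P a" "P b"
  shows "(v a, v b) \<in> R\<^sup>*"
proof -
  have "\<forall>a b. a - b + (b - a) = d \<longrightarrow> P a \<longrightarrow> P b \<longrightarrow> (v a, v b) \<in> R\<^sup>*" for d
  proof (induction d rule: less_induct)
    case (less d)
    show ?case
    proof (intro allI impI)
      fix a b assume d: "a - b + (b - a) = d" and P: "P a" "P b"
      show "(v a, v b) \<in> R\<^sup>*"
      proof (cases "a = b \<or> (\<forall>x. min a b < x \<and> x < max a b \<longrightarrow> \<not> P x)")
        case True
        then show ?thesis using step[OF P] by blast
      next
        case False
        then obtain x where x: "min a b < x" "x < max a b" "P x" by blast
        then have "a - x + (x - a) < d" "x - b + (b - x) < d" using d by auto
        then have "(v a, v x) \<in> R\<^sup>*" "(v x, v b) \<in> R\<^sup>*" using less.IH P x(3) by blast+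
        then show ?thesis by (rule rtrancl_trans)
      qed
    qed
  qed
  then show ?thesis using assms(2,3) by blast
qed

lemma cg_column_rtrancl:
  assumes "cg_vertex M k l (i, j)" "cg_vertex M k l (i, j')"
  shows "((i, j), (i, j')) \<in> (cg_edges M k l)\<^sup>*"
proof (rule rtrancl_linear_chain[where P = "\<lambda>j. cg_vertex M k l (i, j)" and v = "\<lambda>j. (i, j)"])
  fix a b assume "cg_vertex M k l (i, a)" "cg_vertex M k l (i, b)" "a \<noteq> b"
    and "\<forall>x. min a b < x \<and> x < max a b \<longrightarrow> \<not> cg_vertex M k l (i, x)"
  then show "((i, a), (i, b)) \<in> cg_edges M k l"
    by (auto simp: cg_edges_def cg_vertex_def)
qed (use assms in auto)

lemma cg_row_rtrancl:
  assumes "cg_vertex M k l (i, j)" "cg_vertex M k l (i', j)"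
  shows "((i, j), (i', j)) \<in> (cg_edges M k l)\<^sup>*"
proof (rule rtrancl_linear_chain[where P = "\<lambda>i. cg_vertex M k l (i, j)" and v = "\<lambda>i. (i, j)"])
  fix a b assume "cg_vertex M k l (a, j)" "cg_vertex M k l (b, j)" "a \<noteq> b"
    and "\<forall>x. min a b < x \<and> x < max a b \<longrightarrow> \<not> cg_vertex M k l (x, j)"
  then show "((a, j), (b, j)) \<in> cg_edges M k l"
    by (auto simp: cg_edges_def cg_vertex_def)
qed (use assms in auto)

lemma cg_component_cols_iff_rows:
  assumes "cg_vertex M k l (i, j)"
  shows "i \<in> comp_cols (cg_component M k l v0) \<longleftrightarrow> j \<in> comp_rows (cg_component M k l v0)"
proof
  assume "i \<in> comp_cols (cg_component M k l v0)"
  then obtain j' where "cg_vertex M k l (i, j')" "(v0, (i, j')) \<in> (cg_edges M k l)\<^sup>*"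
    by (auto simp: comp_cols_def cg_component_def)
  then have "(v0, (i, j)) \<in> (cg_edges M k l)\<^sup>*"
    using cg_column_rtrancl[OF _ assms] rtrancl_trans by metis
  then show "j \<in> comp_rows (cg_component M k l v0)"
    using assms by (force simp: comp_rows_def cg_component_def)
next
  assume "j \<in> comp_rows (cg_component M k l v0)"
  then obtain i' where "cg_vertex M k l (i', j)" "(v0, (i', j)) \<in> (cg_edges M k l)\<^sup>*"
    by (auto simp: comp_rows_def cg_component_def)
  then have "(v0, (i, j)) \<in> (cg_edges M k l)\<^sup>*"
    using cg_row_rtrancl[OF _ assms] rtrancl_trans by metis
  then show "i \<in> comp_cols (cg_component M k l v0)"
    using assms by (force simp: comp_cols_def cg_component_def)
qed

section \<open>Griddings\<close>

lemma boundary_interval_exists: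
  fixes c :: "nat \<Rightarrow> nat"
  assumes "c 0 < x" "x \<le> c k"
  shows "\<exists>i<k. c i < x \<and> x \<le> c (Suc i)"
  using assms
proof (induction k)
  case (Suc k)
  then show ?case by (cases "x \<le> c k") (auto intro: less_SucI)
qed simp

lemma boundary_interval_unique:
  fixes c :: "nat \<Rightarrow> nat"
  assumes mono: "\<forall>i<k. c i \<le> c (Suc i)" and "i < k" "i' < k"
    and "c i < x" "x \<le> c (Suc i)" "c i' < x" "x \<le> c (Suc i')"
  shows "i = i'"
proof (rule ccontr)
  have le: "c a \<le> c b" if "a \<le> b" "b \<le> k" for a b
    by (rule lift_Suc_mono_le_ivl[of "{..<k}"]) (use mono that in auto)
  assume "i \<noteq> i'"
  then consider "Suc i \<le> i'" | "Suc i' \<le> i" by linarith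
  then show False
  proof cases
    case 1
    then have "c (Suc i) \<le> c i'" using le \<open>i' < k\<close> by simp
    then show False using assms(4-7) by simp
  next
    case 2
    then have "c (Suc i') \<le> c i" using le \<open>i < k\<close> by simp
    then show False using assms(4-7) by simp
  qed
qed

definition separates_cells :: "nat list \<Rightarrow> (nat \<Rightarrow> nat) \<Rightarrow> (nat \<Rightarrow> nat) \<Rightarrow> nat \<Rightarrow> nat \<Rightarrow> nat set \<Rightarrow> nat set \<Rightarrow> bool" where
  "separates_cells \<pi> c r k l C R \<longleftrightarrow>
     (\<forall>i<k. \<forall>j<l. cell_pts \<pi> c r i j \<noteq> {} \<longrightarrow> (i \<in> C \<longleftrightarrow> j \<in> R))"

lemma separates_cells_complement:
  "separates_cells \<pi> c r k l C R \<Longrightarrow> separates_cells \<pi> c r k l ({..<k} - C) ({..<l} - R)"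
  by (simp add: separates_cells_def)

context
  fixes M k l \<pi> c r
  assumes grid: "is_gridding M k l \<pi> c r" and perm: "is_perm \<pi>"
begin

lemma gridding_cell_exists:
  assumes "p \<in> diagram \<pi>"
  obtains i j where "i < k" "j < l" "p \<in> cell_pts \<pi> c r i j"
proof -
  have "fst p \<in> {1..length \<pi>}" "snd p \<in> {1..length \<pi>}"
    using assms fst_diagram snd_diagram[OF perm] by blast+
  then obtain i j where "i < k" "c i < fst p" "fst p \<le> c (Suc i)"
    "j < l" "r j < snd p" "snd p \<le> r (Suc j)"
    using grid boundary_interval_exists[of c "fst p" k] boundary_interval_exists[of r "snd p" l]
    by (auto simp: is_gridding_def)
  then show ?thesis using that assms by (auto simp: cell_pts_def)
qed

lemma gridding_cell_col_unique:
  "p \<in> cell_pts \<pi> c r i j \<Longrightarrow> p \<in> cell_pts \<pi> c r i' j' \<Longrightarrow> i < k \<Longrightarrow> i' < k \<Longrightarrow> i = i'"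
  using grid boundary_interval_unique[of k c i i' "fst p"] by (auto simp: is_gridding_def cell_pts_def)

lemma gridding_cell_row_unique:
  "p \<in> cell_pts \<pi> c r i j \<Longrightarrow> p \<in> cell_pts \<pi> c r i' j' \<Longrightarrow> j < l \<Longrightarrow> j' < l \<Longrightarrow> j = j'"
  using grid boundary_interval_unique[of l r j j' "snd p"] by (auto simp: is_gridding_def cell_pts_def)

lemma boundary_le_length:
  shows "i < k \<Longrightarrow> c (Suc i) \<le> length \<pi>" and "j < l \<Longrightarrow> r (Suc j) \<le> length \<pi>"
proof -
  have c: "c k = length \<pi>" "\<forall>i<k. c i \<le> c (Suc i)" and r: "r l = length \<pi>" "\<forall>j<l. r j \<le> r (Suc j)"
    using grid by (simp_all add: is_gridding_def)
  show "c (Suc i) \<le> length \<pi>" if "i < k"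
    unfolding c(1)[symmetric] by (rule lift_Suc_mono_le_ivl[of "{..<k}"]) (use c(2) that in auto)
  show "r (Suc j) \<le> length \<pi>" if "j < l"
    unfolding r(1)[symmetric] by (rule lift_Suc_mono_le_ivl[of "{..<l}"]) (use r(2) that in auto)
qed

lemma fst_sub_pts:
  assumes sep: "separates_cells \<pi> c r k l C R" and C: "C \<subseteq> {..<k}"
  shows "fst ` sub_pts \<pi> c r C R = (\<Union>i\<in>C. {c i<..c (Suc i)})"
proof
  show "fst ` sub_pts \<pi> c r C R \<subseteq> (\<Union>i\<in>C. {c i<..c (Suc i)})"
    by (auto simp: sub_pts_def cell_pts_def)
  show "(\<Union>i\<in>C. {c i<..c (Suc i)}) \<subseteq> fst ` sub_pts \<pi> c r C R"
  proof
    fix x assume "x \<in> (\<Union>i\<in>C. {c i<..c (Suc i)})"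
    then obtain i where i: "i \<in> C" "c i < x" "x \<le> c (Suc i)" by auto
    then have "x \<in> fst ` diagram \<pi>" using C boundary_le_length(1)[of i] by (auto simp: fst_diagram)
    then obtain p where p: "p \<in> diagram \<pi>" "fst p = x" by auto
    obtain i' j where ij: "i' < k" "j < l" "p \<in> cell_pts \<pi> c r i' j"
      by (rule gridding_cell_exists[OF p(1)])
    have "p \<in> cell_pts \<pi> c r i j" using ij(3) p i by (simp add: cell_pts_def)
    then have "i' = i" using gridding_cell_col_unique ij C i(1) by blast
    then have "j \<in> R" using sep ij i(1) by (auto simp: separates_cells_def)
    then show "x \<in> fst ` sub_pts \<pi> c r C R"
      using ij \<open>i' = i\<close> i(1) p(2) by (force simp: sub_pts_def)
  qed
qed

lemma snd_sub_pts:
  assumes sep: "separates_cells \<pi> c r k l C R" and R: "R \<subseteq> {..<l}"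
  shows "snd ` sub_pts \<pi> c r C R = (\<Union>j\<in>R. {r j<..r (Suc j)})"
proof
  show "snd ` sub_pts \<pi> c r C R \<subseteq> (\<Union>j\<in>R. {r j<..r (Suc j)})"
    by (auto simp: sub_pts_def cell_pts_def)
  show "(\<Union>j\<in>R. {r j<..r (Suc j)}) \<subseteq> snd ` sub_pts \<pi> c r C R"
  proof
    fix y assume "y \<in> (\<Union>j\<in>R. {r j<..r (Suc j)})"
    then obtain j where j: "j \<in> R" "r j < y" "y \<le> r (Suc j)" by auto
    then have "y \<in> snd ` diagram \<pi>"
      using R boundary_le_length(2)[of j] by (auto simp: snd_diagram[OF perm])
    then obtain p where p: "p \<in> diagram \<pi>" "snd p = y" by auto
    obtain i j' where ij: "i < k" "j' < l" "p \<in> cell_pts \<pi> c r i j'"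
      by (rule gridding_cell_exists[OF p(1)])
    have "p \<in> cell_pts \<pi> c r i j" using ij(3) p j by (simp add: cell_pts_def)
    then have "j' = j" using gridding_cell_row_unique ij R j(1) by blast
    then have "i \<in> C" using sep ij j(1) by (auto simp: separates_cells_def)
    then show "y \<in> snd ` sub_pts \<pi> c r C R"
      using ij \<open>j' = j\<close> j(1) p(2) by (force simp: sub_pts_def)
  qed
qed

lemma grid_complexity_sub_pts_le:
  assumes "separates_cells \<pi> c r k l C R" "C \<subseteq> {..<k}" "R \<subseteq> {..<l}"
  shows "grid_complexity (sub_pts \<pi> c r C R) \<le> max k l"
proof -
  have "finite C" "finite R" using assms(2,3) finite_subset by blast+
  then have "intervalicity (fst ` sub_pts \<pi> c r C R) \<le> card C"
    "intervalicity (snd ` sub_pts \<pi> c r C R) \<le> card R"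
    unfolding fst_sub_pts[OF assms(1,2)] snd_sub_pts[OF assms(1,3)]
    by (simp_all add: intervalicity_UN_greaterThanAtMost_le)
  moreover have "card C \<le> k" "card R \<le> l"
    using card_mono[OF _ assms(2)] card_mono[OF _ assms(3)] by simp_all
  ultimately show ?thesis
    unfolding grid_complexity_def by (meson max.mono order_trans)
qed

lemma diagram_eq_sub_pts_Un:
  assumes "separates_cells \<pi> c r k l C R"
  shows "diagram \<pi> = sub_pts \<pi> c r C R \<union> sub_pts \<pi> c r ({..<k} - C) ({..<l} - R)"
proof
  show "diagram \<pi> \<subseteq> sub_pts \<pi> c r C R \<union> sub_pts \<pi> c r ({..<k} - C) ({..<l} - R)"
  proof
    fix p assume "p \<in> diagram \<pi>"
    then obtain i j where ij: "i < k" "j < l" "p \<in> cell_pts \<pi> c r i j" by (rule gridding_cell_exists)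
    then have "i \<in> C \<longleftrightarrow> j \<in> R" using assms by (auto simp: separates_cells_def)
    then show "p \<in> sub_pts \<pi> c r C R \<union> sub_pts \<pi> c r ({..<k} - C) ({..<l} - R)"
      using ij by (auto simp: sub_pts_def)
  qed
qed (auto simp: sub_pts_def cell_pts_def)

lemma sub_pts_disjoint:
  assumes "C \<subseteq> {..<k}"
  shows "sub_pts \<pi> c r C R \<inter> sub_pts \<pi> c r ({..<k} - C) ({..<l} - R) = {}"
  using gridding_cell_col_unique assms by (fastforce simp: sub_pts_def)

end

lemma cg_component_separates_cells:
  assumes "is_gridding M k l \<pi> c r" "\<forall>i<k. \<forall>j<l. M i j = {} \<or> infinite (M i j)"
  shows "separates_cells \<pi> c r k l (comp_cols (cg_component M k l v0)) (comp_rows (cg_component M k l v0))"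
  unfolding separates_cells_def
proof (intro allI impI)
  fix i j assume ij: "i < k" "j < l" "cell_pts \<pi> c r i j \<noteq> {}"
  then have "\<exists>\<sigma>\<in>M i j. std_of (cell_pts \<pi> c r i j) \<sigma>" using assms(1) ij(1,2) by (simp add: is_gridding_def)
  then have "infinite (M i j)" using assms(2) ij(1,2) by blast
  then have "cg_vertex M k l (i, j)" using ij by (simp add: cg_vertex_def)
  then show "i \<in> comp_cols (cg_component M k l v0) \<longleftrightarrow> j \<in> comp_rows (cg_component M k l v0)"
    by (rule cg_component_cols_iff_rows)
qed

theorem mainTheorem15:
  fixes M :: "nat \<Rightarrow> nat \<Rightarrow> nat list set" and k l :: nat
    and \<pi> :: "nat list" and c r :: "nat \<Rightarrow> nat" and v0 :: "nat \<times> nat"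
  assumes classes: "\<forall>i<k. \<forall>j<l. perm_class (M i j)"
    and inf_or_empty: "\<forall>i<k. \<forall>j<l. M i j = {} \<or> infinite (M i j)"
    and disconnected: "\<not> cg_connected M k l"
    and v0: "cg_vertex M k l v0"
    and perm: "is_perm \<pi>"
    and grid: "is_gridding M k l \<pi> c r"
  shows "gw \<pi> \<le>
    max (gw (std (sub_pts \<pi> c r (comp_cols (cg_component M k l v0)) (comp_rows (cg_component M k l v0)))))
        (gw (std (sub_pts \<pi> c r ({..<k} - comp_cols (cg_component M k l v0)) ({..<l} - comp_rows (cg_component M k l v0)))))
    + max k l"
proof -
  let ?C = "comp_cols (cg_component M k l v0)" and ?R = "comp_rows (cg_component M k l v0)"
  have sep: "separates_cells \<pi> c r k l ?C ?R"
    using cg_component_separates_cells[OF grid inf_or_empty] .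
  have bounded: "?C \<subseteq> {..<k}" "?R \<subseteq> {..<l}"
    by (auto simp: comp_cols_def comp_rows_def cg_component_def cg_vertex_def)
  have "0 < k" using v0 by (simp add: cg_vertex_def)
  then have "1 \<le> max k l" by (simp add: le_max_iff_disj)
  then show ?thesis
    using gw_le_split[OF perm diagram_eq_sub_pts_Un[OF grid perm sep] sub_pts_disjoint[OF grid perm bounded(1)]
        grid_complexity_sub_pts_le[OF grid perm sep bounded]
        grid_complexity_sub_pts_le[OF grid perm separates_cells_complement[OF sep]]]
    by blast
qed

end
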